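(* Let $k$ be a field, $d>0$ an integer that is not a multiple of the characteristic of $k$, and $a_1,\ldots,a_n\in k$ all nonzero. Then the diagonal form $a_1x_1^d+\cdots+a_nx_n^d\in k[x_1,\ldots,x_n]$ has strength at least $n/2$.
   Context: For a homogeneous polynomial $f$ of degree $d>0$ over $k$, $\operatorname{str}(f)$ is the minimal $s\ge 0$ such that $f=g_1h_1+\cdots+g_sh_s$ with $g_i,h_i$ homogeneous polynomials over $k$ of degrees $<d$ ($\infty$ if no such expression exists). *)

theory Defs
  imports "HOL-Library.Poly_Mapping" "HOL-Library.Extended_Nat"
begin

text \<open>Multivariate polynomials over 'a in the variables x_0, x_1, ... (indexed by nat):
  a finitely supported map from monomials (exponent vectors nat =>0 nat) to coefficients.
  Multiplication is the convolution product provided by Poly_Mapping.\<close>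
type_synonym 'a mpoly = "(nat \<Rightarrow>\<^sub>0 nat) \<Rightarrow>\<^sub>0 'a"

definition mon_deg :: "(nat \<Rightarrow>\<^sub>0 nat) \<Rightarrow> nat" where
  "mon_deg m = (\<Sum>i\<in>Poly_Mapping.keys m. Poly_Mapping.lookup m i)"

text \<open>p is homogeneous of degree e (the zero polynomial is homogeneous of every degree).\<close>
definition homogeneous :: "nat \<Rightarrow> 'a::zero mpoly \<Rightarrow> bool" where
  "homogeneous e p \<longleftrightarrow> (\<forall>m\<in>Poly_Mapping.keys p. mon_deg m = e)"

definition in_vars :: "nat set \<Rightarrow> 'a::zero mpoly \<Rightarrow> bool" where
  "in_vars V p \<longleftrightarrow> (\<forall>m\<in>Poly_Mapping.keys p. Poly_Mapping.keys m \<subseteq> V)"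

text \<open>Strength of a homogeneous polynomial f of degree d in k[x_0,...,x_(n-1)]:
  the minimal s such that f = g_1 h_1 + ... + g_s h_s with g_i, h_i homogeneous
  polynomials (in the same variables) of degrees < d; infinity if no such expression.\<close>
definition strength :: "nat \<Rightarrow> nat \<Rightarrow> 'a::comm_ring_1 mpoly \<Rightarrow> enat" where
  "strength n d f = Inf {enat s | s. \<exists>g h :: nat \<Rightarrow> 'a mpoly.
      (\<forall>i<s. (\<exists>e<d. homogeneous e (g i)) \<and> in_vars {..<n} (g i)) \<and>
      (\<forall>i<s. (\<exists>e<d. homogeneous e (h i)) \<and> in_vars {..<n} (h i)) \<and>
      f = (\<Sum>i<s. g i * h i)}"

text \<open>The diagonal form a_1 x_1^d + ... + a_n x_n^d (variables indexed 0..n-1).\<close>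
definition diagonal_form :: "nat \<Rightarrow> nat \<Rightarrow> (nat \<Rightarrow> 'a::comm_ring_1) \<Rightarrow> 'a mpoly" where
  "diagonal_form n d a = (\<Sum>i<n. Poly_Mapping.single (Poly_Mapping.single i d) (a i))"

end

theory Submission
  imports Defs "HOL-Library.FuncSet"
begin

text \<open>
  Suppose \<open>f = a\<^sub>1 x\<^sub>1\<^sup>d + \<dots> + a\<^sub>n x\<^sub>n\<^sup>d = g\<^sub>1 h\<^sub>1 + \<dots> + g\<^sub>s h\<^sub>s\<close> with all \<open>g\<^sub>i, h\<^sub>i\<close> forms of
  degree \<open>< d\<close>. Keeping only the degree \<open>d\<close> part, all \<open>g\<^sub>i, h\<^sub>i\<close> may be assumed to have positive
  degree, and differentiating gives \<open>d a\<^sub>j x\<^sub>j\<^sup>d\<^sup>-\<^sup>1 = \<Sum>\<^sub>i (\<partial>\<^sub>j g\<^sub>i h\<^sub>i + g\<^sub>i \<partial>\<^sub>j h\<^sub>i)\<close>. Hence the ideal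
  generated by the \<open>2s\<close> forms \<open>g\<^sub>i, h\<^sub>i\<close> contains a power of every variable, which forces
  \<open>2s \<ge> n\<close>: if \<open>m\<close> forms \<open>p\<^sub>i\<close> of positive degree generate an ideal containing \<open>x\<^sub>j\<^sup>c\<close> for all
  \<open>j\<close>, then by induction on the degree every monomial of degree \<open>D\<close> is a linear combination of
  the products \<open>(\<Prod>\<^sub>i p\<^sub>i\<^sup>\<beta>\<^sup>i) x\<^sup>\<mu>\<close> with \<open>\<beta>\<^sub>i \<le> D\<close> and all exponents of \<open>\<mu>\<close> below \<open>c\<close>. Comparing the
  \<open>(L+1)\<^sup>n\<close> linearly independent monomials with all exponents \<open>\<le> L\<close> with the at most
  \<open>(nL+1)\<^sup>m c\<^sup>n\<close> such products of degree \<open>\<le> nL\<close> shows \<open>m \<ge> n\<close> once \<open>L\<close> is large.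
\<close>

section \<open>Homogeneous polynomials\<close>

lemma keys_add_nat: "Poly_Mapping.keys ((\<alpha>::'a \<Rightarrow>\<^sub>0 nat) + \<beta>) = Poly_Mapping.keys \<alpha> \<union> Poly_Mapping.keys \<beta>"
  by (auto simp: in_keys_iff lookup_add)

lemma keys_minus_nat: "Poly_Mapping.keys ((\<alpha>::'a \<Rightarrow>\<^sub>0 nat) - \<beta>) \<subseteq> Poly_Mapping.keys \<alpha>"
  by (auto simp: in_keys_iff lookup_minus)

lemma mon_deg_eq_sum:
  "finite S \<Longrightarrow> Poly_Mapping.keys \<alpha> \<subseteq> S \<Longrightarrow> mon_deg \<alpha> = (\<Sum>i\<in>S. Poly_Mapping.lookup \<alpha> i)"
  unfolding mon_deg_def by (rule sum.mono_neutral_left) (auto simp: in_keys_iff)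

lemma mon_deg_add: "mon_deg (\<alpha> + \<beta>) = mon_deg \<alpha> + mon_deg \<beta>"
proof -
  let ?S = "Poly_Mapping.keys \<alpha> \<union> Poly_Mapping.keys \<beta>"
  have "mon_deg (\<alpha> + \<beta>) = (\<Sum>i\<in>?S. Poly_Mapping.lookup (\<alpha> + \<beta>) i)"
    by (intro mon_deg_eq_sum) (auto simp: keys_add_nat)
  also have "\<dots> = (\<Sum>i\<in>?S. Poly_Mapping.lookup \<alpha> i) + (\<Sum>i\<in>?S. Poly_Mapping.lookup \<beta> i)"
    by (simp add: lookup_add sum.distrib)
  also have "\<dots> = mon_deg \<alpha> + mon_deg \<beta>"
    by (subst (1 2) mon_deg_eq_sum[of ?S]) auto
  finally show ?thesis .
qed

lemma mon_deg_single [simp]: "mon_deg (Poly_Mapping.single i k) = k"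
  by (simp add: mon_deg_def)

lemma homogeneous_0 [simp]: "homogeneous e 0"
  unfolding homogeneous_def by simp

lemma homogeneous_single: "homogeneous (mon_deg \<alpha>) (Poly_Mapping.single \<alpha> c)"
  unfolding homogeneous_def by simp

lemma homogeneous_add: "homogeneous e p \<Longrightarrow> homogeneous e q \<Longrightarrow> homogeneous e (p + q)"
  unfolding homogeneous_def using keys_add[of p q] by blast

lemma homogeneous_sum: "(\<And>i. i \<in> A \<Longrightarrow> homogeneous e (f i)) \<Longrightarrow> homogeneous e (\<Sum>i\<in>A. f i)"
  by (induction A rule: infinite_finite_induct) (auto intro: homogeneous_add)

lemma homogeneous_mult:
  fixes p q :: "'a::comm_ring_1 mpoly"
  assumes "homogeneous e p" "homogeneous e' q"
  shows "homogeneous (e + e') (p * q)"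
  unfolding homogeneous_def
proof
  fix \<gamma> assume "\<gamma> \<in> Poly_Mapping.keys (p * q)"
  then obtain \<alpha> \<beta> where "\<gamma> = \<alpha> + \<beta>" "\<alpha> \<in> Poly_Mapping.keys p" "\<beta> \<in> Poly_Mapping.keys q"
    using keys_mult by blast
  then show "mon_deg \<gamma> = e + e'"
    using assms by (simp add: homogeneous_def mon_deg_add)
qed

lemma homogeneous_diagonal_form: "homogeneous d (diagonal_form n d a)"
  unfolding diagonal_form_def by (rule homogeneous_sum) (metis homogeneous_single mon_deg_single)

definition hom_component :: "nat \<Rightarrow> 'a::zero mpoly \<Rightarrow> 'a mpoly" where
  "hom_component D p =
     Abs_poly_mapping (\<lambda>\<alpha>. if mon_deg \<alpha> = D then Poly_Mapping.lookup p \<alpha> else 0)"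

lemma lookup_hom_component:
  "Poly_Mapping.lookup (hom_component D p) \<alpha> = (if mon_deg \<alpha> = D then Poly_Mapping.lookup p \<alpha> else 0)"
proof -
  have "{\<alpha>. (if mon_deg \<alpha> = D then Poly_Mapping.lookup p \<alpha> else 0) \<noteq> 0} \<subseteq> Poly_Mapping.keys p"
    by (auto simp: in_keys_iff)
  then have "finite {\<alpha>. (if mon_deg \<alpha> = D then Poly_Mapping.lookup p \<alpha> else 0) \<noteq> 0}"
    by (rule finite_subset) simp
  then show ?thesis
    unfolding hom_component_def by simp
qed

lemma keys_hom_component: "Poly_Mapping.keys (hom_component D p) \<subseteq> Poly_Mapping.keys p"
  by (auto simp: in_keys_iff lookup_hom_component split: if_splits)

lemma homogeneous_hom_component: "homogeneous D (hom_component D p)"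
  unfolding homogeneous_def by (auto simp: in_keys_iff lookup_hom_component split: if_splits)

lemma hom_component_add: "hom_component D (p + q) = hom_component D p + hom_component D q"
  by (rule poly_mapping_eqI) (simp add: lookup_hom_component lookup_add)

lemma hom_component_0 [simp]: "hom_component D 0 = 0"
  by (rule poly_mapping_eqI) (simp add: lookup_hom_component)

lemma hom_component_sum: "hom_component D (\<Sum>i\<in>A. f i) = (\<Sum>i\<in>A. hom_component D (f i))"
  by (induction A rule: infinite_finite_induct) (simp_all add: hom_component_add)

lemma hom_component_homogeneous:
  "homogeneous e p \<Longrightarrow> hom_component D p = (if D = e then p else 0)"
  by (rule poly_mapping_eqI) (auto simp: lookup_hom_component homogeneous_def in_keys_iff)

lemma hom_component_mult:
  fixes p q :: "'a::comm_ring_1 mpoly"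
  assumes p: "homogeneous e p"
  shows "hom_component D (p * q) = (if e \<le> D then p * hom_component (D - e) q else 0)"
proof -
  define q' where "q' = q - hom_component (D - e) q"
  have q'_degrees: "mon_deg \<beta> \<noteq> D - e" if "\<beta> \<in> Poly_Mapping.keys q'" for \<beta>
    using that by (auto simp: q'_def in_keys_iff lookup_minus lookup_hom_component)
  have "hom_component D (p * q') = 0"
  proof (rule poly_mapping_eqI)
    fix \<gamma>
    have "\<gamma> \<notin> Poly_Mapping.keys (p * q')" if "mon_deg \<gamma> = D"
    proof
      assume "\<gamma> \<in> Poly_Mapping.keys (p * q')"
      then obtain \<alpha> \<beta> where "\<gamma> = \<alpha> + \<beta>" "\<alpha> \<in> Poly_Mapping.keys p" "\<beta> \<in> Poly_Mapping.keys q'"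
        using keys_mult by blast
      then show False
        using p q'_degrees that by (force simp: homogeneous_def mon_deg_add)
    qed
    then show "Poly_Mapping.lookup (hom_component D (p * q')) \<gamma> = Poly_Mapping.lookup 0 \<gamma>"
      by (auto simp: lookup_hom_component in_keys_iff)
  qed
  moreover have "hom_component D (p * hom_component (D - e) q) =
      (if e \<le> D then p * hom_component (D - e) q else 0)"
    using homogeneous_mult[OF p homogeneous_hom_component, of "D - e" q]
    by (auto simp: hom_component_homogeneous)
  moreover have "p * q = p * hom_component (D - e) q + p * q'"
    by (simp add: q'_def algebra_simps)
  ultimately show ?thesis
    by (simp add: hom_component_add)
qed

lemma in_vars_0 [simp]: "in_vars V 0"
  unfolding in_vars_def by simp

lemma in_vars_single: "Poly_Mapping.keys \<alpha> \<subseteq> V \<Longrightarrow> in_vars V (Poly_Mapping.single \<alpha> c)"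
  unfolding in_vars_def by simp

lemma in_vars_add: "in_vars V p \<Longrightarrow> in_vars V q \<Longrightarrow> in_vars V (p + q)"
  unfolding in_vars_def using keys_add[of p q] by blast

lemma in_vars_sum: "(\<And>i. i \<in> A \<Longrightarrow> in_vars V (f i)) \<Longrightarrow> in_vars V (\<Sum>i\<in>A. f i)"
  by (induction A rule: infinite_finite_induct) (auto intro: in_vars_add)

lemma in_vars_mult:
  fixes p q :: "'a::comm_ring_1 mpoly"
  assumes "in_vars V p" "in_vars V q"
  shows "in_vars V (p * q)"
  unfolding in_vars_def
proof
  fix \<gamma> assume "\<gamma> \<in> Poly_Mapping.keys (p * q)"
  then obtain \<alpha> \<beta> where "\<gamma> = \<alpha> + \<beta>" "\<alpha> \<in> Poly_Mapping.keys p" "\<beta> \<in> Poly_Mapping.keys q"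
    using keys_mult by blast
  then show "Poly_Mapping.keys \<gamma> \<subseteq> V"
    using assms by (auto simp: in_vars_def keys_add_nat)
qed

lemma in_vars_hom_component: "in_vars V p \<Longrightarrow> in_vars V (hom_component D p)"
  unfolding in_vars_def using keys_hom_component by blast

section \<open>Partial derivatives\<close>

text \<open>For \<open>lookup \<alpha> j = 0\<close> the truncated exponent \<open>\<alpha> - single j 1 = \<alpha>\<close> is harmless, since the
  coefficient vanishes.\<close>
definition pderiv_var :: "nat \<Rightarrow> 'a::comm_ring_1 mpoly \<Rightarrow> 'a mpoly" where
  "pderiv_var j p = (\<Sum>\<alpha>\<in>Poly_Mapping.keys p.
     Poly_Mapping.single (\<alpha> - Poly_Mapping.single j 1)
       (of_nat (Poly_Mapping.lookup \<alpha> j) * Poly_Mapping.lookup p \<alpha>))"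

lemma pderiv_var_eq_sum:
  assumes "finite A" "Poly_Mapping.keys p \<subseteq> A"
  shows "pderiv_var j p = (\<Sum>\<alpha>\<in>A.
     Poly_Mapping.single (\<alpha> - Poly_Mapping.single j 1)
       (of_nat (Poly_Mapping.lookup \<alpha> j) * Poly_Mapping.lookup p \<alpha>))"
  unfolding pderiv_var_def using assms by (intro sum.mono_neutral_left) (auto simp: in_keys_iff)

lemma pderiv_var_add: "pderiv_var j (p + q) = pderiv_var j p + pderiv_var j q"
proof -
  let ?A = "Poly_Mapping.keys p \<union> Poly_Mapping.keys q"
  have "pderiv_var j (p + q) = (\<Sum>\<alpha>\<in>?A.
     Poly_Mapping.single (\<alpha> - Poly_Mapping.single j 1)
       (of_nat (Poly_Mapping.lookup \<alpha> j) * Poly_Mapping.lookup (p + q) \<alpha>))"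
    using keys_add[of p q] by (intro pderiv_var_eq_sum) auto
  also have "\<dots> = pderiv_var j p + pderiv_var j q"
    by (subst (1 2) pderiv_var_eq_sum[of ?A])
      (auto simp: lookup_add distrib_left single_add sum.distrib)
  finally show ?thesis .
qed

lemma pderiv_var_0 [simp]: "pderiv_var j 0 = 0"
  by (simp add: pderiv_var_def)

lemma pderiv_var_sum: "pderiv_var j (\<Sum>i\<in>A. f i) = (\<Sum>i\<in>A. pderiv_var j (f i))"
  by (induction A rule: infinite_finite_induct) (simp_all add: pderiv_var_add)

lemma pderiv_var_single:
  "pderiv_var j (Poly_Mapping.single \<alpha> c) =
     Poly_Mapping.single (\<alpha> - Poly_Mapping.single j 1) (of_nat (Poly_Mapping.lookup \<alpha> j) * c)"
  by (subst pderiv_var_eq_sum[of "{\<alpha>}"]) auto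

lemma single_diff_add_exponent:
  "Poly_Mapping.single (\<alpha> - Poly_Mapping.single j 1 + \<beta>) (of_nat (Poly_Mapping.lookup \<alpha> j) * c) =
   Poly_Mapping.single (\<alpha> + \<beta> - Poly_Mapping.single j 1) (of_nat (Poly_Mapping.lookup \<alpha> j) * (c::'a::comm_ring_1))"
proof (cases "Poly_Mapping.lookup \<alpha> j = 0")
  case False
  then have "\<alpha> - Poly_Mapping.single j 1 + \<beta> = \<alpha> + \<beta> - Poly_Mapping.single j 1"
    by (intro poly_mapping_eqI) (auto simp: lookup_add lookup_minus lookup_single when_def)
  then show ?thesis by simp
qed simp

lemma pderiv_var_mult_single:
  fixes c c' :: "'a::comm_ring_1"
  shows "pderiv_var j (Poly_Mapping.single \<alpha> c * Poly_Mapping.single \<beta> c') =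
    pderiv_var j (Poly_Mapping.single \<alpha> c) * Poly_Mapping.single \<beta> c' +
    Poly_Mapping.single \<alpha> c * pderiv_var j (Poly_Mapping.single \<beta> c')"
  using single_diff_add_exponent[of \<alpha> j \<beta> "c * c'"] single_diff_add_exponent[of \<beta> j \<alpha> "c * c'"]
  by (simp add: pderiv_var_single mult_single lookup_add algebra_simps single_add)

lemma poly_mapping_sum_single:
  fixes p :: "'a \<Rightarrow>\<^sub>0 'b::comm_monoid_add"
  shows "p = (\<Sum>\<alpha>\<in>Poly_Mapping.keys p. Poly_Mapping.single \<alpha> (Poly_Mapping.lookup p \<alpha>))"
  by (rule poly_mapping_eqI) (simp add: lookup_sum lookup_single when_def in_keys_iff)

lemma pderiv_var_mult:
  fixes p q :: "'a::comm_ring_1 mpoly"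
  shows "pderiv_var j (p * q) = pderiv_var j p * q + p * pderiv_var j q"
proof -
  have "pderiv_var j ((\<Sum>\<alpha>\<in>A. Poly_Mapping.single \<alpha> (f \<alpha>)) * (\<Sum>\<beta>\<in>B. Poly_Mapping.single \<beta> (g \<beta>))) =
      pderiv_var j (\<Sum>\<alpha>\<in>A. Poly_Mapping.single \<alpha> (f \<alpha>)) * (\<Sum>\<beta>\<in>B. Poly_Mapping.single \<beta> (g \<beta>)) +
      (\<Sum>\<alpha>\<in>A. Poly_Mapping.single \<alpha> (f \<alpha>)) * pderiv_var j (\<Sum>\<beta>\<in>B. Poly_Mapping.single \<beta> (g \<beta>))"
    for A B and f g :: "_ \<Rightarrow> 'a"
    by (simp add: sum_product pderiv_var_sum pderiv_var_mult_single sum.distrib)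
  from this[where A = "Poly_Mapping.keys p" and f = "Poly_Mapping.lookup p"
      and B = "Poly_Mapping.keys q" and g = "Poly_Mapping.lookup q"]
  show ?thesis
    unfolding poly_mapping_sum_single[symmetric] .
qed

lemma in_vars_pderiv_var: "in_vars V p \<Longrightarrow> in_vars V (pderiv_var j p)"
  unfolding pderiv_var_def
  by (intro in_vars_sum in_vars_single) (meson in_vars_def keys_minus_nat order_trans)

lemma pderiv_var_diagonal_form:
  assumes "j < n"
  shows "pderiv_var j (diagonal_form n d a) =
    Poly_Mapping.single (Poly_Mapping.single j (d - 1)) (of_nat d * a j)"
proof -
  have "pderiv_var j (diagonal_form n d a) = (\<Sum>i<n. if i = j then
      Poly_Mapping.single (Poly_Mapping.single j (d - 1)) (of_nat d * a j) else 0)"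
    unfolding diagonal_form_def pderiv_var_sum pderiv_var_single
    by (intro sum.cong refl) (auto simp: lookup_single single_diff[symmetric])
  then show ?thesis
    using assms by simp
qed

section \<open>Linear algebra of monomials\<close>

definition smult :: "'k::field \<Rightarrow> 'k mpoly \<Rightarrow> 'k mpoly" where
  "smult c p = Poly_Mapping.single 0 c * p"

lemma lookup_smult: "Poly_Mapping.lookup (smult c p) \<alpha> = c * Poly_Mapping.lookup p \<alpha>"
  unfolding smult_def mult_map_scale_conv_mult[symmetric]
  by (simp add: Poly_Mapping.map.rep_eq when_def)

interpretation mpoly: vector_space "smult :: 'k::field \<Rightarrow> 'k mpoly \<Rightarrow> 'k mpoly"
  by unfold_locales
    (simp_all add: smult_def algebra_simps single_add mult_single flip: mult.assoc)

definition monomial :: "(nat \<Rightarrow>\<^sub>0 nat) \<Rightarrow> 'a::comm_ring_1 mpoly" where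
  "monomial \<alpha> = Poly_Mapping.single \<alpha> 1"

lemma keys_monomial [simp]: "Poly_Mapping.keys (monomial \<alpha>) = {\<alpha>}"
  by (simp add: monomial_def)

lemma lookup_monomial: "Poly_Mapping.lookup (monomial \<alpha>) \<beta> = (if \<alpha> = \<beta> then 1 else 0)"
  by (simp add: monomial_def lookup_single when_def)

lemma inj_monomial: "inj monomial"
  by (rule injI) (metis keys_monomial singleton_inject)

lemma monomial_add: "monomial (\<alpha> + \<beta>) = monomial \<alpha> * monomial \<beta>"
  by (simp add: monomial_def mult_single)

lemma homogeneous_monomial: "homogeneous (mon_deg \<alpha>) (monomial \<alpha>)"
  unfolding monomial_def by (rule homogeneous_single)

lemma in_vars_monomial: "Poly_Mapping.keys \<alpha> \<subseteq> V \<Longrightarrow> in_vars V (monomial \<alpha>)"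
  unfolding monomial_def by (rule in_vars_single)

lemma smult_monomial: "smult c (monomial \<alpha>) = Poly_Mapping.single \<alpha> c"
  by (simp add: smult_def monomial_def mult_single)

lemma in_vars_smult: "in_vars V p \<Longrightarrow> in_vars V (smult c p)"
  unfolding in_vars_def by (auto simp: in_keys_iff lookup_smult)

lemma in_span_monomials: "p \<in> mpoly.span (monomial ` Poly_Mapping.keys p)"
proof -
  have "(\<Sum>\<alpha>\<in>Poly_Mapping.keys p. smult (Poly_Mapping.lookup p \<alpha>) (monomial \<alpha>))
      \<in> mpoly.span (monomial ` Poly_Mapping.keys p)"
    by (intro mpoly.span_sum mpoly.span_scale mpoly.span_base) auto
  then show ?thesis
    by (simp add: smult_monomial flip: poly_mapping_sum_single)
qed

lemma independent_monomials: "mpoly.independent (monomial ` A :: 'k::field mpoly set)"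
  unfolding mpoly.independent_explicit_finite_subsets
proof (intro allI impI ballI)
  fix S u v
  assume S: "S \<subseteq> monomial ` A" "finite S" and v: "v \<in> S"
    and zero: "(\<Sum>w\<in>S. smult (u w) w) = (0::'k mpoly)"
  obtain \<alpha> where v_eq: "v = monomial \<alpha>"
    using S v by auto
  have lookup_\<alpha>: "Poly_Mapping.lookup w \<alpha> = (if w = v then 1 else 0)" if "w \<in> S" for w
    using that S(1) v_eq by (auto simp: lookup_monomial inj_eq[OF inj_monomial])
  have "0 = Poly_Mapping.lookup (\<Sum>w\<in>S. smult (u w) w) \<alpha>"
    using zero by simp
  also have "\<dots> = (\<Sum>w\<in>S. if w = v then u w else 0)"
    by (auto simp: lookup_sum lookup_smult lookup_\<alpha> intro: sum.cong)
  also have "\<dots> = u v"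
    using S(2) v by simp
  finally show "u v = 0" ..
qed

lemma homogeneous_in_span:
  assumes "homogeneous D q" "in_vars V q"
    and "\<And>\<alpha>. Poly_Mapping.keys \<alpha> \<subseteq> V \<Longrightarrow> mon_deg \<alpha> = D \<Longrightarrow> monomial \<alpha> \<in> mpoly.span S"
  shows "q \<in> mpoly.span S"
proof -
  have "monomial ` Poly_Mapping.keys q \<subseteq> mpoly.span S"
    using assms by (auto simp: homogeneous_def in_vars_def)
  then have "mpoly.span (monomial ` Poly_Mapping.keys q) \<subseteq> mpoly.span S"
    by (rule mpoly.span_minimal[OF _ mpoly.subspace_span])
  then show ?thesis
    using in_span_monomials by blast
qed

definition exps_below :: "nat \<Rightarrow> nat \<Rightarrow> (nat \<Rightarrow>\<^sub>0 nat) set" where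
  "exps_below n b = {\<alpha>. Poly_Mapping.keys \<alpha> \<subseteq> {..<n} \<and> (\<forall>j<n. Poly_Mapping.lookup \<alpha> j < b)}"

lemma bij_betw_exps_below:
  "bij_betw (\<lambda>\<alpha>. restrict (Poly_Mapping.lookup \<alpha>) {..<n}) (exps_below n b) (PiE {..<n} (\<lambda>_. {..<b}))"
proof (rule bij_betw_imageI)
  show "inj_on (\<lambda>\<alpha>. restrict (Poly_Mapping.lookup \<alpha>) {..<n}) (exps_below n b)"
  proof (rule inj_onI, rule poly_mapping_eqI)
    fix \<alpha> \<beta> j
    assume \<alpha>: "\<alpha> \<in> exps_below n b" and \<beta>: "\<beta> \<in> exps_below n b"
      and eq: "restrict (Poly_Mapping.lookup \<alpha>) {..<n} = restrict (Poly_Mapping.lookup \<beta>) {..<n}"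
    show "Poly_Mapping.lookup \<alpha> j = Poly_Mapping.lookup \<beta> j"
    proof (cases "j < n")
      case True
      then show ?thesis
        using fun_cong[OF eq, of j] by simp
    next
      case False
      then have "j \<notin> Poly_Mapping.keys \<alpha>" "j \<notin> Poly_Mapping.keys \<beta>"
        using \<alpha> \<beta> by (auto simp: exps_below_def)
      then show ?thesis
        by (simp add: not_in_keys_iff_lookup_eq_zero)
    qed
  qed
  show "(\<lambda>\<alpha>. restrict (Poly_Mapping.lookup \<alpha>) {..<n}) ` exps_below n b = PiE {..<n} (\<lambda>_. {..<b})"
  proof
    show "(\<lambda>\<alpha>. restrict (Poly_Mapping.lookup \<alpha>) {..<n}) ` exps_below n b \<subseteq> PiE {..<n} (\<lambda>_. {..<b})"
      by (rule image_subsetI) (simp add: exps_below_def restrict_PiE_iff)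
    show "PiE {..<n} (\<lambda>_. {..<b}) \<subseteq> (\<lambda>\<alpha>. restrict (Poly_Mapping.lookup \<alpha>) {..<n}) ` exps_below n b"
    proof
      fix F assume F: "F \<in> PiE {..<n} (\<lambda>_. {..<b})"
      define \<alpha> where "\<alpha> = Abs_poly_mapping (\<lambda>j. if j < n then F j else 0)"
      have "finite {j. (if j < n then F j else 0) \<noteq> 0}"
        by (rule finite_subset[of _ "{..<n}"]) auto
      then have lookup_\<alpha>: "Poly_Mapping.lookup \<alpha> = (\<lambda>j. if j < n then F j else 0)"
        unfolding \<alpha>_def by simp
      have "Poly_Mapping.keys \<alpha> \<subseteq> {..<n}"
        by (auto simp: in_keys_iff lookup_\<alpha> split: if_splits)
      moreover have "\<forall>j<n. Poly_Mapping.lookup \<alpha> j < b"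
        using F by (auto simp: lookup_\<alpha>)
      ultimately have "\<alpha> \<in> exps_below n b"
        by (simp add: exps_below_def)
      moreover have "restrict (Poly_Mapping.lookup \<alpha>) {..<n} = F"
        using F by (auto simp: lookup_\<alpha> PiE_iff extensional_def)
      ultimately show "F \<in> (\<lambda>\<alpha>. restrict (Poly_Mapping.lookup \<alpha>) {..<n}) ` exps_below n b"
        by blast
    qed
  qed
qed

lemma finite_exps_below: "finite (exps_below n b)"
  using bij_betw_finite[OF bij_betw_exps_below] by (simp add: finite_PiE)

lemma card_exps_below: "card (exps_below n b) = b ^ n"
  using bij_betw_same_card[OF bij_betw_exps_below] by (simp add: card_PiE)

lemma mon_deg_exps_below_le:
  assumes \<alpha>: "\<alpha> \<in> exps_below n (L + 1)"
  shows "mon_deg \<alpha> \<le> n * L"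
proof -
  have "mon_deg \<alpha> = (\<Sum>j<n. Poly_Mapping.lookup \<alpha> j)"
    using \<alpha> by (intro mon_deg_eq_sum) (auto simp: exps_below_def)
  also have "\<dots> \<le> (\<Sum>j<n. L)"
    using \<alpha> by (intro sum_mono) (auto simp: exps_below_def)
  finally show ?thesis by simp
qed

lemma polynomial_growth_gap:
  fixes m n c :: nat
  assumes "m < n"
  shows "\<exists>L. (n * L + 1) ^ m * c ^ n < (L + 1) ^ n"
proof -
  define L where "L = n ^ (n - 1) * c ^ n"
  have "(n * L + 1) ^ m \<le> (n * (L + 1)) ^ m"
    using assms by (intro power_mono) auto
  also have "\<dots> \<le> (n * (L + 1)) ^ (n - 1)"
    using assms by (intro power_increasing) auto
  finally have "(n * L + 1) ^ m * c ^ n \<le> (n * (L + 1)) ^ (n - 1) * c ^ n"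
    by (rule mult_right_mono) simp
  also have "\<dots> = n ^ (n - 1) * c ^ n * (L + 1) ^ (n - 1)"
    unfolding power_mult_distrib by (simp only: mult_ac)
  also have "\<dots> = L * (L + 1) ^ (n - 1)"
    by (simp only: L_def)
  also have "\<dots> < (L + 1) * (L + 1) ^ (n - 1)"
    by simp
  also have "\<dots> = (L + 1) ^ n"
    using assms by (simp flip: power_Suc)
  finally show ?thesis
    by blast
qed

section \<open>Ideals of forms containing powers of all variables\<close>

definition in_generated_ideal :: "nat set \<Rightarrow> ('i \<Rightarrow> 'a::comm_ring_1 mpoly) \<Rightarrow> 'i set \<Rightarrow> 'a mpoly \<Rightarrow> bool"
  where "in_generated_ideal V p I q \<longleftrightarrow> (\<exists>r. (\<forall>i\<in>I. in_vars V (r i)) \<and> q = (\<Sum>i\<in>I. p i * r i))"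

locale forms_containing_variable_powers =
  fixes I :: "'i set" and p :: "'i \<Rightarrow> 'k::field mpoly" and e :: "'i \<Rightarrow> nat" and n c :: nat
  assumes finite_I: "finite I"
    and homogeneous_p: "i \<in> I \<Longrightarrow> homogeneous (e i) (p i)"
    and degree_pos: "i \<in> I \<Longrightarrow> 0 < e i"
    and variable_powers: "j < n \<Longrightarrow> in_generated_ideal {..<n} p I (monomial (Poly_Mapping.single j c))"
begin

definition gen_prod :: "('i \<Rightarrow> nat) \<Rightarrow> 'k mpoly" where
  "gen_prod \<beta> = (\<Prod>i\<in>I. p i ^ \<beta> i)"

definition spanning_products :: "nat \<Rightarrow> 'k mpoly set" where
  "spanning_products D =
     (\<lambda>(\<beta>, \<mu>). gen_prod \<beta> * monomial \<mu>) ` (PiE I (\<lambda>_. {..D}) \<times> exps_below n c)"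

lemma gen_prod_upd: "i \<in> I \<Longrightarrow> gen_prod (\<beta>(i := Suc (\<beta> i))) = p i * gen_prod \<beta>"
  unfolding gen_prod_def using finite_I
  by (simp add: prod.remove prod.cong[of "I - {i}" _ "\<lambda>k. p k ^ (\<beta>(i := Suc (\<beta> i))) k"] mult_ac)

lemma spanning_products_mono: "D \<le> D' \<Longrightarrow> spanning_products D \<subseteq> spanning_products D'"
  unfolding spanning_products_def by (intro image_mono Sigma_mono PiE_mono) auto

lemma finite_spanning_products: "finite (spanning_products D)"
  unfolding spanning_products_def using finite_I
  by (intro finite_imageI finite_cartesian_product finite_PiE finite_exps_below) auto

lemma card_spanning_products_le: "card (spanning_products D) \<le> (D + 1) ^ card I * c ^ n"
proof -
  have "card (spanning_products D) \<le> card (PiE I (\<lambda>_. {..D}) \<times> exps_below n c)"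
    unfolding spanning_products_def
    by (rule card_image_le) (use finite_I finite_exps_below in \<open>auto intro: finite_PiE\<close>)
  also have "\<dots> = (D + 1) ^ card I * c ^ n"
    using finite_I by (simp add: card_cartesian_product card_PiE card_exps_below)
  finally show ?thesis .
qed

lemma gen_mult_in_span:
  assumes "x \<in> mpoly.span (spanning_products D)" "D < D'" "i \<in> I"
  shows "p i * x \<in> mpoly.span (spanning_products D')"
  using assms(1)
proof (induction rule: mpoly.span_induct_alt)
  case base
  show ?case by (simp add: mpoly.span_zero)
next
  case (step a x y)
  then obtain \<beta> \<mu> where \<beta>: "\<beta> \<in> PiE I (\<lambda>_. {..D})" and \<mu>: "\<mu> \<in> exps_below n c"
    and x: "x = gen_prod \<beta> * monomial \<mu>"
    unfolding spanning_products_def by auto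
  have "\<beta>(i := Suc (\<beta> i)) \<in> PiE I (\<lambda>_. {..D'})"
    using \<beta> assms(2,3) by (auto simp: PiE_iff extensional_def)
  moreover have "p i * x = gen_prod (\<beta>(i := Suc (\<beta> i))) * monomial \<mu>"
    by (simp add: x gen_prod_upd[OF assms(3)] mult.assoc)
  ultimately have "p i * x \<in> spanning_products D'"
    using \<mu> unfolding spanning_products_def by (auto intro!: image_eqI[of _ _ "(_, \<mu>)"])
  moreover have "p i * (smult a x + y) = smult a (p i * x) + p i * y"
    by (simp add: smult_def algebra_simps)
  ultimately show ?case
    using step.IH by (simp add: mpoly.span_add mpoly.span_scale mpoly.span_base)
qed

text \<open>A monomial outside the box \<open>exps_below n c\<close> is divisible by some \<open>x\<^sub>j\<^sup>c\<close>; writing \<open>x\<^sub>j\<^sup>c\<close>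
  as a combination of the \<open>p\<^sub>i\<close> and taking homogeneous components lowers the degree.\<close>
lemma monomial_as_combination:
  assumes "Poly_Mapping.keys \<alpha> \<subseteq> {..<n}" "\<alpha> \<notin> exps_below n c"
  obtains q where
    "\<And>i. i \<in> I \<Longrightarrow> homogeneous (mon_deg \<alpha> - e i) (q i) \<and> in_vars {..<n} (q i)"
    "monomial \<alpha> = (\<Sum>i | i \<in> I \<and> e i \<le> mon_deg \<alpha>. p i * q i)"
proof -
  obtain j where j: "j < n" "c \<le> Poly_Mapping.lookup \<alpha> j"
    using assms by (auto simp: exps_below_def not_less)
  obtain r where r: "\<forall>i\<in>I. in_vars {..<n} (r i)"
    and x_j: "monomial (Poly_Mapping.single j c) = (\<Sum>i\<in>I. p i * r i)"
    using variable_powers[OF j(1)] unfolding in_generated_ideal_def by blast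
  define \<alpha>' where "\<alpha>' = \<alpha> - Poly_Mapping.single j c"
  define q where "q i = hom_component (mon_deg \<alpha> - e i) (r i * monomial \<alpha>')" for i
  have "\<alpha> = Poly_Mapping.single j c + \<alpha>'"
    using j by (intro poly_mapping_eqI) (auto simp: \<alpha>'_def lookup_add lookup_minus lookup_single when_def)
  then have "monomial \<alpha> = monomial (Poly_Mapping.single j c) * monomial \<alpha>'"
    by (simp only: monomial_add)
  also have "\<dots> = (\<Sum>i\<in>I. p i * (r i * monomial \<alpha>'))"
    by (simp add: x_j sum_distrib_right mult.assoc)
  finally have "monomial \<alpha> = hom_component (mon_deg \<alpha>) (\<Sum>i\<in>I. p i * (r i * monomial \<alpha>'))"
    by (metis hom_component_homogeneous homogeneous_monomial)
  also have "\<dots> = (\<Sum>i\<in>I. if e i \<le> mon_deg \<alpha> then p i * q i else 0)"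
    unfolding hom_component_sum
    by (intro sum.cong refl) (simp add: hom_component_mult[OF homogeneous_p] q_def)
  also have "\<dots> = (\<Sum>i | i \<in> I \<and> e i \<le> mon_deg \<alpha>. p i * q i)"
    using finite_I by (rule sum.inter_filter[symmetric])
  finally have combination: "monomial \<alpha> = (\<Sum>i | i \<in> I \<and> e i \<le> mon_deg \<alpha>. p i * q i)" .
  have "Poly_Mapping.keys \<alpha>' \<subseteq> {..<n}"
    using assms(1) keys_minus_nat[of \<alpha>] unfolding \<alpha>'_def by blast
  then have "homogeneous (mon_deg \<alpha> - e i) (q i) \<and> in_vars {..<n} (q i)" if "i \<in> I" for i
    using r that unfolding q_def
    by (simp add: homogeneous_hom_component in_vars_hom_component in_vars_mult in_vars_monomial)
  with combination show thesis
    using that by blast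
qed

lemma monomial_in_span:
  "Poly_Mapping.keys \<alpha> \<subseteq> {..<n} \<Longrightarrow> monomial \<alpha> \<in> mpoly.span (spanning_products (mon_deg \<alpha>))"
proof (induction "mon_deg \<alpha>" arbitrary: \<alpha> rule: less_induct)
  case less
  show ?case
  proof (cases "\<alpha> \<in> exps_below n c")
    case True
    have "gen_prod (\<lambda>i\<in>I. 0) = 1"
      unfolding gen_prod_def by (intro prod.neutral) auto
    then have "monomial \<alpha> \<in> spanning_products (mon_deg \<alpha>)"
      using True unfolding spanning_products_def
      by (auto intro!: image_eqI[of _ _ "(\<lambda>i\<in>I. 0, \<alpha>)"])
    then show ?thesis
      by (rule mpoly.span_base)
  next
    case False
    obtain q where q: "\<And>i. i \<in> I \<Longrightarrow> homogeneous (mon_deg \<alpha> - e i) (q i) \<and> in_vars {..<n} (q i)"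
      and \<alpha>: "monomial \<alpha> = (\<Sum>i | i \<in> I \<and> e i \<le> mon_deg \<alpha>. p i * q i)"
      using monomial_as_combination[OF less.prems False] by blast
    have "p i * q i \<in> mpoly.span (spanning_products (mon_deg \<alpha>))"
      if i: "i \<in> I" "e i \<le> mon_deg \<alpha>" for i
    proof -
      have smaller: "mon_deg \<alpha> - e i < mon_deg \<alpha>"
        using degree_pos[OF i(1)] i(2) by linarith
      have "monomial \<beta> \<in> mpoly.span (spanning_products (mon_deg \<alpha> - e i))"
        if "Poly_Mapping.keys \<beta> \<subseteq> {..<n}" "mon_deg \<beta> = mon_deg \<alpha> - e i" for \<beta>
        using less.hyps[of \<beta>] that smaller by simp
      then have "q i \<in> mpoly.span (spanning_products (mon_deg \<alpha> - e i))"
        using q[OF i(1)] by (blast intro: homogeneous_in_span)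
      then show ?thesis
        using gen_mult_in_span smaller i(1) by blast
    qed
    then show ?thesis
      unfolding \<alpha> by (auto intro: mpoly.span_sum)
  qed
qed

theorem num_vars_le_card: "n \<le> card I"
proof (rule ccontr)
  assume "\<not> n \<le> card I"
  then obtain L where L: "(n * L + 1) ^ card I * c ^ n < (L + 1) ^ n"
    using polynomial_growth_gap by (meson not_le)
  have "monomial ` exps_below n (L + 1) \<subseteq> mpoly.span (spanning_products (n * L))"
  proof
    fix x :: "'k mpoly" assume "x \<in> monomial ` exps_below n (L + 1)"
    then obtain \<alpha> where \<alpha>: "\<alpha> \<in> exps_below n (L + 1)" and x: "x = monomial \<alpha>"
      by blast
    have "x \<in> mpoly.span (spanning_products (mon_deg \<alpha>))"
      using \<alpha> x monomial_in_span by (auto simp: exps_below_def)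
    then show "x \<in> mpoly.span (spanning_products (n * L))"
      using mpoly.span_mono[OF spanning_products_mono[OF mon_deg_exps_below_le[OF \<alpha>]]] by blast
  qed
  then have "card (monomial ` exps_below n (L + 1) :: 'k mpoly set) \<le> card (spanning_products (n * L))"
    using mpoly.independent_span_bound[OF finite_spanning_products independent_monomials] by blast
  then have "(L + 1) ^ n \<le> (n * L + 1) ^ card I * c ^ n"
    using card_spanning_products_le[of "n * L"]
    by (simp add: card_image inj_on_subset[OF inj_monomial] card_exps_below)
  with L show False
    by simp
qed

end

section \<open>Strength of diagonal forms\<close>

lemma decomposition_with_positive_degrees:
  fixes f :: "'a::comm_ring_1 mpoly"
  assumes "homogeneous d f" and f: "f = (\<Sum>i<s. g i * h i)"
    and "\<forall>i<s. (\<exists>e<d. homogeneous e (g i)) \<and> in_vars V (g i)"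
    and "\<forall>i<s. (\<exists>e<d. homogeneous e (h i)) \<and> in_vars V (h i)"
  obtains e\<^sub>1 g' e\<^sub>2 h' where
    "\<And>i. i < s \<Longrightarrow> homogeneous (e\<^sub>1 i) (g' i) \<and> 0 < e\<^sub>1 i \<and> in_vars V (g' i)"
    "\<And>i. i < s \<Longrightarrow> homogeneous (e\<^sub>2 i) (h' i) \<and> 0 < e\<^sub>2 i \<and> in_vars V (h' i)"
    "f = (\<Sum>i<s. g' i * h' i)"
proof -
  obtain E where E: "\<And>i. i < s \<Longrightarrow> E i < d \<and> homogeneous (E i) (g i)"
    using assms(3) by metis
  obtain E' where E': "\<And>i. i < s \<Longrightarrow> E' i < d \<and> homogeneous (E' i) (h i)"
    using assms(4) by metis
  define keep where "keep i \<longleftrightarrow> E i + E' i = d" for i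
  define g' where "g' i = (if keep i then g i else 0)" for i
  define h' where "h' i = (if keep i then h i else 0)" for i
  have "hom_component d (g i * h i) = g' i * h' i" if "i < s" for i
    using homogeneous_mult[of "E i" "g i" "E' i" "h i"] E[OF that] E'[OF that]
    by (simp add: hom_component_homogeneous keep_def g'_def h'_def)
  then have "hom_component d f = (\<Sum>i<s. g' i * h' i)"
    unfolding f hom_component_sum by simp
  then have "f = (\<Sum>i<s. g' i * h' i)"
    using assms(1) by (simp add: hom_component_homogeneous)
  moreover have "homogeneous (if keep i then E i else 1) (g' i) \<and> 0 < (if keep i then E i else 1) \<and>
      in_vars V (g' i)" if "i < s" for i
    using E[OF that] E'[OF that] assms(3) that by (auto simp: keep_def g'_def)
  moreover have "homogeneous (if keep i then E' i else 1) (h' i) \<and> 0 < (if keep i then E' i else 1) \<and>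
      in_vars V (h' i)" if "i < s" for i
    using E[OF that] E'[OF that] assms(4) that by (auto simp: keep_def h'_def)
  ultimately show thesis
    by (rule that[rotated 2])
qed

lemma diagonal_form_variable_powers_in_ideal:
  fixes a :: "nat \<Rightarrow> 'k::field"
  assumes "of_nat d * a j \<noteq> 0" "j < n"
    and f: "diagonal_form n d a = (\<Sum>i<s. g i * h i)"
    and vars: "\<forall>i<s. in_vars {..<n} (g i) \<and> in_vars {..<n} (h i)"
  shows "in_generated_ideal {..<n} (\<lambda>(i, b). if b then g i else h i) ({..<s} \<times> UNIV)
           (monomial (Poly_Mapping.single j (d - 1)))"
proof -
  define c where "c = of_nat d * a j"
  define r where "r = (\<lambda>(i, b). smult (inverse c) (pderiv_var j (if b then h i else g i)))"
  have "pderiv_var j (diagonal_form n d a) = smult c (monomial (Poly_Mapping.single j (d - 1)))"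
    using assms(2) by (simp add: pderiv_var_diagonal_form smult_monomial c_def)
  moreover have "c \<noteq> 0"
    using assms(1) by (simp add: c_def)
  ultimately have "monomial (Poly_Mapping.single j (d - 1)) = smult (inverse c) (pderiv_var j (diagonal_form n d a))"
    by (simp add: mpoly.scale_scale)
  also have "\<dots> = (\<Sum>i<s. g i * r (i, True) + h i * r (i, False))"
    unfolding f by (simp add: r_def smult_def pderiv_var_sum pderiv_var_mult sum_distrib_left algebra_simps)
  also have "\<dots> = (\<Sum>x\<in>{..<s} \<times> UNIV. (\<lambda>(i, b). if b then g i else h i) x * r x)"
    unfolding sum.cartesian_product' by (simp add: UNIV_bool add.commute)
  finally show ?thesis
    unfolding in_generated_ideal_def using vars
    by (auto simp: r_def intro!: exI[of _ r] in_vars_smult in_vars_pderiv_var)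
qed

lemma diagonal_form_decomposition_length_ge:
  fixes a :: "nat \<Rightarrow> 'k::field"
  assumes "of_nat d \<noteq> (0::'k)" "\<forall>i<n. a i \<noteq> 0"
    and "\<forall>i<s. (\<exists>e<d. homogeneous e (g i)) \<and> in_vars {..<n} (g i)"
    and "\<forall>i<s. (\<exists>e<d. homogeneous e (h i)) \<and> in_vars {..<n} (h i)"
    and "diagonal_form n d a = (\<Sum>i<s. g i * h i)"
  shows "n \<le> 2 * s"
proof -
  obtain e\<^sub>1 g' e\<^sub>2 h' where
    g': "\<And>i. i < s \<Longrightarrow> homogeneous (e\<^sub>1 i) (g' i) \<and> 0 < e\<^sub>1 i \<and> in_vars {..<n} (g' i)" and
    h': "\<And>i. i < s \<Longrightarrow> homogeneous (e\<^sub>2 i) (h' i) \<and> 0 < e\<^sub>2 i \<and> in_vars {..<n} (h' i)" and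
    f: "diagonal_form n d a = (\<Sum>i<s. g' i * h' i)"
    using decomposition_with_positive_degrees[OF homogeneous_diagonal_form assms(5,3,4)] by blast
  have vars: "\<forall>i<s. in_vars {..<n} (g' i) \<and> in_vars {..<n} (h' i)"
    using g' h' by blast
  have "in_generated_ideal {..<n} (\<lambda>(i, b). if b then g' i else h' i) ({..<s} \<times> UNIV)
      (monomial (Poly_Mapping.single j (d - 1)))" if "j < n" for j
    using assms(1,2) that by (intro diagonal_form_variable_powers_in_ideal[OF _ that f vars]) simp
  then interpret forms_containing_variable_powers "{..<s} \<times> UNIV"
    "\<lambda>(i, b). if b then g' i else h' i" "\<lambda>(i, b). if b then e\<^sub>1 i else e\<^sub>2 i" n "d - 1"
    using g' h' by unfold_locales auto
  show ?thesis
    using num_vars_le_card by (simp add: card_cartesian_product)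
qed

lemma le_mult_Inf_enat:
  fixes S :: "enat set"
  assumes "k \<noteq> 0" "\<And>x. x \<in> S \<Longrightarrow> y \<le> k * x"
  shows "y \<le> k * Inf S"
proof (cases "S = {}")
  case True
  have "k * \<infinity> = \<infinity>"
    using assms(1) by (simp add: imult_is_infinity)
  then show ?thesis
    using True by (simp add: top_enat_def)
next
  case False
  then show ?thesis
    using assms(2) wellorder_InfI by blast
qed

theorem proposition3p3:
  fixes a :: "nat \<Rightarrow> 'k::field" and n d :: nat
  assumes "d > 0"
    and "of_nat d \<noteq> (0::'k)"
    and "\<forall>i<n. a i \<noteq> 0"
  shows "enat n \<le> 2 * strength n d (diagonal_form n d a)"
  unfolding strength_def
  by (rule le_mult_Inf_enat)
    (simp, clarsimp simp: numeral_eq_enat, rule diagonal_form_decomposition_length_ge[OF assms(2,3)])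

end
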